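(* Let $d\ge1$. For integers $0\le m\le n$, $0\le j\le m/2$ and $1\le\ell\le\dim\mathcal H_{m-2j}^d$, $$Q_{m,j,\ell}^{n,-1} = a_{m,j}\Big[\big(Q_{m,j,\ell}^{n,0}-b_{m,n}Q_{m-2,j-1,\ell}^{n,0}\big) - 2\big(Q_{m,j,\ell}^{n-1,0}-c_{m,n}Q_{m-2,j-1,\ell}^{n-1,0}\big) + \big(Q_{m,j,\ell}^{n-2,0}-d_{m,n}Q_{m-2,j-1,\ell}^{n-2,0}\big)\Big],$$ where $a_{m,j}=\frac{2m-2j+d-2}{2m+d-2}$ (with $a_{0,0}=1$ when $d=2$), $b_{m,n}=(n-m+1)(n-m+2)$, $c_{m,n}=(n+m+d-2)(n-m+1)$ and $d_{m,n}=(n+m+d-2)(n+m+d-3)$.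
   Context: For real $\alpha$ define $L_n^{\alpha}(t)=\sum_{k=0}^n \frac{(\alpha+k+1)_{n-k}}{(n-k)!}\frac{(-t)^k}{k!}$, and for real $\alpha,\beta$ define $P_n^{(\alpha,\beta)}(s)=\sum_{k=0}^n \frac{(\alpha+k+1)_{n-k}(n+\alpha+\beta+1)_k}{k!\,(n-k)!}\left(\frac{s-1}{2}\right)^k$ (classical Laguerre and Jacobi polynomials, extended polynomially in the parameters); $(a)_k$ is the Pochhammer symbol. For an integer $p\ge0$, $\mathcal H_p^d$ is the space of homogeneous harmonic polynomials of degree $p$ in $d$ variables (for $d=1$: $\mathcal H_0^1=\mathrm{span}\{1\}$, $\mathcal H_1^1=\mathrm{span}\{x\}$, $\mathcal H_p^1=\{0\}$ for $p\ge2$), and $\{Y_\ell^p\}$ is an orthonormal basis of it with respect to the normalized surface measure on the unit sphere $\mathbb S^{d-1}$. For $\mu\ge-1$ and integers $0\le m\le n$, $0\le j\le m/2$, $1\le \ell\le \dim\mathcal H^d_{m-2j}$, $$Q_{m,j,\ell}^{n,\mu}(x,t)=L_{n-m}^{2m+2\mu+d}(t)\,t^{2j}\,P_j^{(\mu,\,m-2j+\frac{d-2}{2})}\!\left(2\frac{\|x\|^2}{t^2}-1\right)Y_\ell^{m-2j}(x),\qquad x\in\mathbb R^d,\ t\in\mathbb R.$$ Convention: $Q_{m',j',\ell}^{n',\mu}:=0$ whenever $m'<0$, $j'<0$, or $n'<m'$. *)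

theory Defs
  imports "HOL-Analysis.Analysis"
begin

definition laguerre :: "nat \<Rightarrow> real \<Rightarrow> real \<Rightarrow> real" where
  "laguerre n \<alpha> t = (\<Sum>k\<le>n. pochhammer (\<alpha> + real k + 1) (n - k) / fact (n - k) * (-t) ^ k / fact k)"

definition jacobi :: "nat \<Rightarrow> real \<Rightarrow> real \<Rightarrow> real \<Rightarrow> real" where
  "jacobi n \<alpha> \<beta> s = (\<Sum>k\<le>n. pochhammer (\<alpha> + real k + 1) (n - k) * pochhammer (real n + \<alpha> + \<beta> + 1) k
        / (fact k * fact (n - k)) * ((s - 1) / 2) ^ k)"

text \<open>The polynomial t^(2j) P_j^(a,b)(2|x|^2/t^2 - 1), written as the polynomial in (x,t) it is:
  since t^2 ((s-1)/2) = |x|^2 - t^2 for s = 2|x|^2/t^2 - 1, each term t^(2j) ((s-1)/2)^k equals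
  (|x|^2 - t^2)^k t^(2(j-k)).  For t \<noteq> 0 this coincides with the literal formula.\<close>
definition hom_jacobi :: "nat \<Rightarrow> real \<Rightarrow> real \<Rightarrow> 'a::real_normed_vector \<Rightarrow> real \<Rightarrow> real" where
  "hom_jacobi n \<alpha> \<beta> x t = (\<Sum>k\<le>n. pochhammer (\<alpha> + real k + 1) (n - k) * pochhammer (real n + \<alpha> + \<beta> + 1) k
        / (fact k * fact (n - k)) * ((norm x)\<^sup>2 - t\<^sup>2) ^ k * t ^ (2 * (n - k)))"

definition harmonic_hom :: "nat \<Rightarrow> (real ^ 'd \<Rightarrow> real) \<Rightarrow> bool" where
  "harmonic_hom p Y \<longleftrightarrow>
     (\<exists>c :: ('d \<Rightarrow> nat) \<Rightarrow> real. \<forall>x. Y x = (\<Sum>\<alpha> \<in> {\<alpha>. (\<Sum>i\<in>UNIV. \<alpha> i) = p}. c \<alpha> * (\<Prod>i\<in>UNIV. (x $ i) ^ (\<alpha> i))))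
   \<and> (\<forall>x. (\<Sum>i\<in>UNIV. deriv (\<lambda>s. deriv (\<lambda>r. Y (x + r *\<^sub>R axis i 1)) s) 0) = 0)"

text \<open>Q^{n,mu}_{m,j} with harmonic factor Y (playing the role of Y_l^{m-2j}); zero by convention
  when m < 0, j < 0 or n < m.\<close>
definition Qpoly :: "real \<Rightarrow> int \<Rightarrow> int \<Rightarrow> int \<Rightarrow> (real ^ 'd \<Rightarrow> real) \<Rightarrow> real ^ 'd \<Rightarrow> real \<Rightarrow> real" where
  "Qpoly \<mu> n m j Y x t =
     (if m < 0 \<or> j < 0 \<or> n < m then 0
      else laguerre (nat (n - m)) (2 * of_int m + 2 * \<mu> + real CARD('d)) t
           * hom_jacobi (nat j) \<mu> (of_int m - 2 * of_int j + (real CARD('d) - 2) / 2) x t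
           * Y x)"

definition coef_a :: "nat \<Rightarrow> int \<Rightarrow> int \<Rightarrow> real" where
  "coef_a d m j = (if d = 2 \<and> m = 0 then 1
     else (2 * of_int m - 2 * of_int j + real d - 2) / (2 * of_int m + real d - 2))"

end

theory Submission
  imports Defs
begin

(* Both sides factor as (Laguerre factor) * (homogeneous Jacobi factor) * Y.  Lowering the Laguerre parameter by 2 is a second backward difference in the degree,
   L_k^(a-2) = L_k^a - 2 L_(k-1)^a + L_(k-2)^a, and lowering the Jacobi parameter from 0 to -1 gives
   (2j+b) P_j^(-1,b) = (j+b) (P_j^(0,b) - P_(j-1)^(0,b)), whose homogenised second term carries a
   factor t^2.  Finally t^2 L_k^(a+2) expands in L_k^a, L_(k+1)^a, L_(k+2)^a with exactly the
   coefficients d, c, b of the statement; this turns t^2 L_(n-m)^(2m+d-2) into the Laguerre factors of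
   Q_(m-2,j-1)^(n-2,0), Q_(m-2,j-1)^(n-1,0) and Q_(m-2,j-1)^(n,0).  Writing
   L_n^a(t) = sum_i binom(n+a, n-i) (-t)^i / i!, the Laguerre identities are coefficientwise Pascal's
   rule and absorption for generalised binomial coefficients. *)

definition laguerre_coeff :: "nat \<Rightarrow> real \<Rightarrow> nat \<Rightarrow> real" where
  "laguerre_coeff n a i = (if i \<le> n then ((a + real n) gchoose (n - i)) / fact i else 0)"

lemma laguerre_eq_sum_coeff:
  assumes "n \<le> N"
  shows "laguerre n a t = (\<Sum>i\<le>N. laguerre_coeff n a i * (-t) ^ i)"
proof -
  have "laguerre n a t = (\<Sum>i\<le>n. laguerre_coeff n a i * (-t) ^ i)"
    unfolding laguerre_def laguerre_coeff_def
    by (intro sum.cong) (auto simp: gbinomial_pochhammer' of_nat_diff algebra_simps)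
  also have "\<dots> = (\<Sum>i\<le>N. laguerre_coeff n a i * (-t) ^ i)"
    by (rule sum.mono_neutral_left) (use assms in \<open>auto simp: laguerre_coeff_def\<close>)
  finally show ?thesis .
qed

lemma laguerre_coeff_param_minus_one:
  "laguerre_coeff (Suc n) (a - 1) i = laguerre_coeff (Suc n) a i - laguerre_coeff n a i"
proof (cases "i \<le> n")
  case True
  then have "Suc n - i = Suc (n - i)" by simp
  then show ?thesis
    using True gbinomial_Suc_Suc[of "a + real n" "n - i"]
    by (simp add: laguerre_coeff_def add_ac add_divide_distrib)
qed (auto simp: laguerre_coeff_def le_Suc_eq)

lemma laguerre_coeff_param_plus_one:
  "laguerre_coeff k (a + 1) i =
     (real k + 1) * laguerre_coeff (Suc k) a (Suc i) - (real k + a + 1) * laguerre_coeff k a (Suc i)"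
proof (cases "i < k")
  case True
  then have "k - i = Suc (k - Suc i)" by simp
  then have "real (k - i) * ((a + real k + 1) gchoose (k - i))
      = (a + real k + 1) * ((a + real k) gchoose (k - Suc i))"
    using gbinomial_absorption[of "k - Suc i" "a + real k + 1"] by simp
  moreover have "fact (Suc i) = (real i + 1) * (fact i :: real)" by simp
  ultimately show ?thesis
    using True by (simp add: laguerre_coeff_def of_nat_diff divide_simps) (simp add: algebra_simps)
next
  case False
  then show ?thesis
    by (cases "i = k") (auto simp: laguerre_coeff_def simp del: fact_Suc simp add: fact_reduce add.commute)
qed

lemma laguerre_0 [simp]: "laguerre 0 a t = 1"
  by (simp add: laguerre_def)

lemma laguerre_param_minus_one:
  "laguerre (Suc n) (a - 1) t = laguerre (Suc n) a t - laguerre n a t"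
  by (simp add: laguerre_eq_sum_coeff[of _ "Suc n"] laguerre_coeff_param_minus_one
      left_diff_distrib sum_subtractf)

lemma laguerre_times_var:
  "t * laguerre k (a + 1) t = (real k + a + 1) * laguerre k a t - (real k + 1) * laguerre (Suc k) a t"
proof -
  define f where
    "f i = (real k + a + 1) * laguerre_coeff k a i - (real k + 1) * laguerre_coeff (Suc k) a i" for i
  have "f 0 = 0"
    using gbinomial_absorption[of k "a + real k + 1"]
    by (simp add: f_def laguerre_coeff_def algebra_simps)
  have "t * laguerre k (a + 1) t = (\<Sum>i\<le>k. - laguerre_coeff k (a + 1) i * (-t) ^ Suc i)"
    by (simp add: laguerre_eq_sum_coeff[of k k] sum_distrib_left mult_ac)
  also have "\<dots> = (\<Sum>i\<le>k. f (Suc i) * (-t) ^ Suc i)"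
    unfolding laguerre_coeff_param_plus_one f_def by (simp add: algebra_simps)
  also have "\<dots> = (\<Sum>i\<le>Suc k. f i * (-t) ^ i)"
    unfolding sum.atMost_Suc_shift[of _ k] using \<open>f 0 = 0\<close> by simp
  also have "\<dots> = (real k + a + 1) * (\<Sum>i\<le>Suc k. laguerre_coeff k a i * (-t) ^ i)
      - (real k + 1) * (\<Sum>i\<le>Suc k. laguerre_coeff (Suc k) a i * (-t) ^ i)"
    unfolding f_def left_diff_distrib sum_subtractf sum_distrib_left by (simp only: mult.assoc)
  finally show ?thesis
    by (simp only: laguerre_eq_sum_coeff[of _ "Suc k"] le_SucI order_refl)
qed

lemma laguerre_times_var_squared:
  "t\<^sup>2 * laguerre k (a + 2) t = (real k + a + 2) * (real k + a + 1) * laguerre k a t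
     - 2 * (real k + 1) * (real k + a + 2) * laguerre (Suc k) a t
     + (real k + 1) * (real k + 2) * laguerre (Suc (Suc k)) a t"
proof -
  have "t * laguerre k (a + 2) t
      = (real k + a + 2) * laguerre k (a + 1) t - (real k + 1) * laguerre (Suc k) (a + 1) t"
    using laguerre_times_var[of t k "a + 1"] by (simp add: add.assoc)
  then have square: "t\<^sup>2 * laguerre k (a + 2) t
      = (real k + a + 2) * (t * laguerre k (a + 1) t) - (real k + 1) * (t * laguerre (Suc k) (a + 1) t)"
    unfolding power2_eq_square by (metis (no_types, lifting) mult.assoc mult.left_commute right_diff_distrib)
  have shifted: "t * laguerre (Suc k) (a + 1) t
      = (real k + a + 2) * laguerre (Suc k) a t - (real k + 2) * laguerre (Suc (Suc k)) a t"
    using laguerre_times_var[of t "Suc k" a] by (simp add: algebra_simps)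
  show ?thesis
    unfolding square shifted laguerre_times_var[of t k a] by (simp add: algebra_simps)
qed

definition jacobi_coeff :: "nat \<Rightarrow> real \<Rightarrow> real \<Rightarrow> nat \<Rightarrow> real" where
  "jacobi_coeff n \<alpha> \<beta> k = pochhammer (\<alpha> + real k + 1) (n - k)
     * pochhammer (real n + \<alpha> + \<beta> + 1) k / (fact k * fact (n - k))"

lemma hom_jacobi_eq_sum_coeff:
  "hom_jacobi n \<alpha> \<beta> x t
    = (\<Sum>k\<le>n. jacobi_coeff n \<alpha> \<beta> k * ((norm x)\<^sup>2 - t\<^sup>2) ^ k * t ^ (2 * (n - k)))"
  by (simp add: hom_jacobi_def jacobi_coeff_def)

lemma pochhammer_jacobi_contiguous:
  fixes z \<alpha> :: real
  assumes "k \<le> n"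
  shows "(z + real (Suc n)) * (\<alpha> + real k) * pochhammer z k
    = z * (\<alpha> + real (Suc n)) * pochhammer (z + 1) k - (z - \<alpha>) * (real (n - k) + 1) * pochhammer z k"
proof (cases k)
  case 0
  then show ?thesis by (simp add: algebra_simps)
next
  case (Suc i)
  define Q where "Q = pochhammer (z + 1) i"
  have "pochhammer z k = z * Q"
    unfolding Suc Q_def by (rule pochhammer_rec)
  moreover have "pochhammer (z + 1) k = (z + real k) * Q"
    unfolding Suc Q_def by (simp add: pochhammer_rec' add_ac)
  ultimately show ?thesis
    using assms by (simp add: of_nat_diff algebra_simps)
qed

lemma jacobi_coeff_param_minus_one:
  assumes "k \<le> n"
  shows "(2 * real (Suc n) + \<alpha> + \<beta>) * jacobi_coeff (Suc n) (\<alpha> - 1) \<beta> k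
    = (real (Suc n) + \<alpha> + \<beta>) * jacobi_coeff (Suc n) \<alpha> \<beta> k
      - (real (Suc n) + \<beta>) * jacobi_coeff n \<alpha> \<beta> k"
proof -
  define P where "P = pochhammer (\<alpha> + real k + 1) (n - k)"
  define z where "z = real (Suc n) + \<alpha> + \<beta>"
  have nk: "Suc n - k = Suc (n - k)" using assms by simp
  have P1: "pochhammer (\<alpha> - 1 + real k + 1) (Suc n - k) = (\<alpha> + real k) * P"
    unfolding nk P_def by (simp add: pochhammer_rec add_ac)
  have P2: "pochhammer (\<alpha> + real k + 1) (Suc n - k) = (\<alpha> + real (Suc n)) * P"
    unfolding nk P_def using assms by (simp add: pochhammer_rec' of_nat_diff algebra_simps)
  have F: "fact (Suc n - k) = (real (n - k) + 1) * (fact (n - k) :: real)"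
    unfolding nk by simp
  have Z: "pochhammer (real (Suc n) + (\<alpha> - 1) + \<beta> + 1) k = pochhammer z k"
    "pochhammer (real (Suc n) + \<alpha> + \<beta> + 1) k = pochhammer (z + 1) k"
    "pochhammer (real n + \<alpha> + \<beta> + 1) k = pochhammer z k"
    by (simp_all add: z_def algebra_simps)
  have "z + real (Suc n) = 2 * real (Suc n) + \<alpha> + \<beta>" "z - \<alpha> = real (Suc n) + \<beta>"
    by (simp_all add: z_def)
  note key = pochhammer_jacobi_contiguous[OF assms, of z \<alpha>, unfolded this]
  define D where "D = fact k * fact (n - k) * (real (n - k) + 1)"
  have "(2 * real (Suc n) + \<alpha> + \<beta>) * jacobi_coeff (Suc n) (\<alpha> - 1) \<beta> k
      = P / D * ((2 * real (Suc n) + \<alpha> + \<beta>) * (\<alpha> + real k) * pochhammer z k)"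
    unfolding jacobi_coeff_def P1 F Z D_def by (simp add: field_simps)
  also have "\<dots> = P / D * (z * (\<alpha> + real (Suc n)) * pochhammer (z + 1) k
      - (real (Suc n) + \<beta>) * (real (n - k) + 1) * pochhammer z k)"
    unfolding key ..
  also have "\<dots> = z * jacobi_coeff (Suc n) \<alpha> \<beta> k - (real (Suc n) + \<beta>) * jacobi_coeff n \<alpha> \<beta> k"
  proof -
    have "jacobi_coeff (Suc n) \<alpha> \<beta> k = P / D * ((\<alpha> + real (Suc n)) * pochhammer (z + 1) k)"
      unfolding jacobi_coeff_def P2 F Z D_def by (simp add: field_simps)
    moreover have "jacobi_coeff n \<alpha> \<beta> k = P / D * ((real (n - k) + 1) * pochhammer z k)"
      unfolding jacobi_coeff_def Z D_def P_def[symmetric]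
      by (simp add: add_pos_nonneg divide_simps)
    ultimately show ?thesis by (simp add: algebra_simps add_divide_distrib)
  qed
  finally show ?thesis by (simp only: z_def)
qed

lemma jacobi_coeff_top_param_minus_one:
  "(2 * real (Suc n) + \<alpha> + \<beta>) * jacobi_coeff (Suc n) (\<alpha> - 1) \<beta> (Suc n)
    = (real (Suc n) + \<alpha> + \<beta>) * jacobi_coeff (Suc n) \<alpha> \<beta> (Suc n)"
proof -
  define z where "z = real (Suc n) + \<alpha> + \<beta>"
  have "(z + real (Suc n)) * pochhammer z (Suc n) = z * pochhammer (z + 1) (Suc n)"
    by (metis pochhammer_rec pochhammer_rec')
  then show ?thesis
    by (simp add: jacobi_coeff_def z_def algebra_simps)
qed

lemma hom_jacobi_param_minus_one:
  "(2 * real (Suc n) + \<alpha> + \<beta>) * hom_jacobi (Suc n) (\<alpha> - 1) \<beta> x t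
    = (real (Suc n) + \<alpha> + \<beta>) * hom_jacobi (Suc n) \<alpha> \<beta> x t
      - (real (Suc n) + \<beta>) * t\<^sup>2 * hom_jacobi n \<alpha> \<beta> x t"
proof -
  define u where "u = (norm x)\<^sup>2 - t\<^sup>2"
  define s where "s k = u ^ k * t ^ (2 * (Suc n - k))" for k
  have top: "hom_jacobi (Suc n) \<gamma> \<beta> x t
      = (\<Sum>k\<le>n. jacobi_coeff (Suc n) \<gamma> \<beta> k * s k) + jacobi_coeff (Suc n) \<gamma> \<beta> (Suc n) * u ^ Suc n"
    for \<gamma>
    by (simp add: hom_jacobi_eq_sum_coeff s_def u_def mult.assoc)
  have shifted: "t\<^sup>2 * hom_jacobi n \<alpha> \<beta> x t = (\<Sum>k\<le>n. jacobi_coeff n \<alpha> \<beta> k * s k)"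
    unfolding hom_jacobi_eq_sum_coeff sum_distrib_left
    by (intro sum.cong refl) (auto simp: s_def u_def Suc_diff_le power2_eq_square)
  have bulk: "(2 * real (Suc n) + \<alpha> + \<beta>) * (\<Sum>k\<le>n. jacobi_coeff (Suc n) (\<alpha> - 1) \<beta> k * s k)
      = (real (Suc n) + \<alpha> + \<beta>) * (\<Sum>k\<le>n. jacobi_coeff (Suc n) \<alpha> \<beta> k * s k)
        - (real (Suc n) + \<beta>) * (\<Sum>k\<le>n. jacobi_coeff n \<alpha> \<beta> k * s k)"
    unfolding sum_distrib_left sum_subtractf[symmetric]
    by (intro sum.cong refl)
      (simp only: atMost_iff mult.assoc[symmetric] jacobi_coeff_param_minus_one left_diff_distrib)
  have highest: "(2 * real (Suc n) + \<alpha> + \<beta>) * (jacobi_coeff (Suc n) (\<alpha> - 1) \<beta> (Suc n) * u ^ Suc n)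
      = (real (Suc n) + \<alpha> + \<beta>) * (jacobi_coeff (Suc n) \<alpha> \<beta> (Suc n) * u ^ Suc n)"
    by (simp only: mult.assoc[symmetric] jacobi_coeff_top_param_minus_one)
  show ?thesis
    unfolding top distrib_left mult.assoc[of _ "t\<^sup>2"] shifted bulk highest by simp
qed

definition laguerre_int :: "int \<Rightarrow> real \<Rightarrow> real \<Rightarrow> real" where
  "laguerre_int n a t = (if n < 0 then 0 else laguerre (nat n) a t)"

lemma laguerre_int_param_minus_one:
  "laguerre_int n (a - 1) t = laguerre_int n a t - laguerre_int (n - 1) a t"
proof (cases "n \<le> 0")
  case True
  then show ?thesis by (cases "n = 0") (simp_all add: laguerre_int_def)
next
  case False
  define k where "k = nat (n - 1)"
  have "nat n = Suc k" "nat (n - 1) = k" "\<not> n < 0" "\<not> n - 1 < 0"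
    using False by (simp_all add: k_def)
  then show ?thesis by (simp add: laguerre_int_def laguerre_param_minus_one)
qed

lemma laguerre_int_param_minus_two:
  "laguerre_int n (a - 2) t = laguerre_int n a t - 2 * laguerre_int (n - 1) a t + laguerre_int (n - 2) a t"
  using laguerre_int_param_minus_one[of n "a - 1" t] laguerre_int_param_minus_one[of "n - 1" "a - 1" t]
    laguerre_int_param_minus_one[of n a t] laguerre_int_param_minus_one[of "n - 1" a t]
  by (simp add: algebra_simps)

lemma Qpoly_eq_factors:
  fixes Y :: "real ^ 'd \<Rightarrow> real"
  assumes "0 \<le> m" "0 \<le> j"
  shows "Qpoly \<mu> n m j Y x t = laguerre_int (n - m) (2 * of_int m + 2 * \<mu> + real CARD('d)) t
     * hom_jacobi (nat j) \<mu> (of_int m - 2 * of_int j + (real CARD('d) - 2) / 2) x t * Y x"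
  using assms by (simp add: Qpoly_def laguerre_int_def)

lemma Qpoly_minus_one_eq_factors:
  fixes Y :: "real ^ 'd \<Rightarrow> real"
  assumes "0 \<le> m" "0 \<le> j"
  shows "Qpoly (-1) n m j Y x t = laguerre_int (n - m) (2 * of_int m + real CARD('d) - 2) t
     * hom_jacobi (nat j) (-1) (of_int m - 2 * of_int j + (real CARD('d) - 2) / 2) x t * Y x"
proof -
  have "2 * of_int m + 2 * (-1) + real CARD('d) = 2 * of_int m + real CARD('d) - 2" by simp
  then show ?thesis using Qpoly_eq_factors[OF assms, of "-1" n Y x t] by (simp only:)
qed

lemma Qpoly_second_difference:
  fixes Y :: "real ^ 'd \<Rightarrow> real"
  assumes "0 \<le> m" "0 \<le> j"
  shows "Qpoly 0 n m j Y x t - 2 * Qpoly 0 (n - 1) m j Y x t + Qpoly 0 (n - 2) m j Y x t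
    = laguerre_int (n - m) (2 * of_int m + real CARD('d) - 2) t
      * hom_jacobi (nat j) 0 (of_int m - 2 * of_int j + (real CARD('d) - 2) / 2) x t * Y x"
proof -
  define a where "a = 2 * of_int m + real CARD('d)"
  define H where "H = hom_jacobi (nat j) 0 (of_int m - 2 * of_int j + (real CARD('d) - 2) / 2) x t"
  have Q: "Qpoly 0 n' m j Y x t = laguerre_int (n' - m) a t * H * Y x" for n'
    using Qpoly_eq_factors[OF assms, of 0 n'] by (simp add: a_def H_def)
  have "n - 1 - m = n - m - 1" "n - 2 - m = n - m - 2" by simp_all
  then have "Qpoly 0 n m j Y x t - 2 * Qpoly 0 (n - 1) m j Y x t + Qpoly 0 (n - 2) m j Y x t
      = (laguerre_int (n - m) a t - 2 * laguerre_int (n - m - 1) a t + laguerre_int (n - m - 2) a t)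
        * H * Y x"
    unfolding Q by (simp add: algebra_simps)
  also have "\<dots> = laguerre_int (n - m) (a - 2) t * H * Y x"
    by (simp only: laguerre_int_param_minus_two)
  finally show ?thesis by (simp add: a_def H_def)
qed

lemma Qpoly_lower_combination:
  fixes Y :: "real ^ 'd \<Rightarrow> real"
  assumes "2 \<le> m" "m \<le> n" "1 \<le> j"
  shows "of_int ((n - m + 1) * (n - m + 2)) * Qpoly 0 n (m - 2) (j - 1) Y x t
      - 2 * of_int ((n + m + int CARD('d) - 2) * (n - m + 1)) * Qpoly 0 (n - 1) (m - 2) (j - 1) Y x t
      + of_int ((n + m + int CARD('d) - 2) * (n + m + int CARD('d) - 3)) * Qpoly 0 (n - 2) (m - 2) (j - 1) Y x t
    = t\<^sup>2 * laguerre_int (n - m) (2 * of_int m + real CARD('d) - 2) t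
      * hom_jacobi (nat j - 1) 0 (of_int m - 2 * of_int j + (real CARD('d) - 2) / 2) x t * Y x"
proof -
  define k where "k = nat (n - m)"
  have k: "n - m = int k" using assms(2) by (simp add: k_def)
  define a where "a = 2 * of_int m + real CARD('d) - 4"
  define H where "H = hom_jacobi (nat j - 1) 0 (of_int m - 2 * of_int j + (real CARD('d) - 2) / 2) x t"
  have Q: "Qpoly 0 n' (m - 2) (j - 1) Y x t = laguerre_int (n' - m + 2) a t * H * Y x" for n'
    using assms Qpoly_eq_factors[of "m - 2" "j - 1" 0 n' Y x t]
    by (simp add: a_def H_def nat_diff_distrib algebra_simps)
  have L: "laguerre_int (n - m + 2) a t = laguerre (Suc (Suc k)) a t"
    "laguerre_int (n - 1 - m + 2) a t = laguerre (Suc k) a t"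
    "laguerre_int (n - 2 - m + 2) a t = laguerre k a t"
    "laguerre_int (n - m) (2 * of_int m + real CARD('d) - 2) t = laguerre k (a + 2) t"
    using k by (simp_all add: laguerre_int_def a_def nat_add_distrib)
  have c: "of_int ((n - m + 1) * (n - m + 2)) = (real k + 1) * (real k + 2)"
    "of_int ((n + m + int CARD('d) - 2) * (n - m + 1)) = (real k + a + 2) * (real k + 1)"
    "of_int ((n + m + int CARD('d) - 2) * (n + m + int CARD('d) - 3)) = (real k + a + 2) * (real k + a + 1)"
    using k by (simp_all add: a_def algebra_simps)
  show ?thesis
    unfolding Q L c H_def[symmetric] laguerre_times_var_squared by (simp add: algebra_simps)
qed

lemma coef_a_0:
  assumes "0 < d" "0 \<le> m"
  shows "coef_a d m 0 = 1"
proof (cases "m = 0")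
  case True
  with assms show ?thesis by (cases "d = 2") (simp_all add: coef_a_def)
next
  case False
  with assms have "2 * of_int m + real d - 2 > 0" by simp
  then show ?thesis by (simp add: coef_a_def)
qed

lemma hom_jacobi_minus_one_eq_coef_a:
  fixes d :: nat and m j :: int
  assumes "1 \<le> j" "2 * j \<le> m"
  defines "\<beta> \<equiv> of_int m - 2 * of_int j + (real d - 2) / 2"
  shows "hom_jacobi (nat j) (-1) \<beta> x t
    = coef_a d m j * (hom_jacobi (nat j) 0 \<beta> x t - t\<^sup>2 * hom_jacobi (nat j - 1) 0 \<beta> x t)"
proof -
  define p where "p = nat j - 1"
  have p: "nat j = Suc p" "of_int j = real (Suc p)" using assms(1) by (simp_all add: p_def)
  have "2 \<le> m" using assms by linarith
  have denom: "2 * real (Suc p) + \<beta> = (2 * of_int m + real d - 2) / 2"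
    unfolding \<beta>_def p(2)[symmetric] by (simp add: field_simps)
  have numer: "real (Suc p) + \<beta> = (2 * of_int m - 2 * of_int j + real d - 2) / 2"
    unfolding \<beta>_def p(2)[symmetric] by (simp add: field_simps)
  have denom_pos: "2 * of_int m + real d - 2 > 0" using \<open>2 \<le> m\<close> by simp
  then have pos: "2 * real (Suc p) + \<beta> > 0" unfolding denom by simp
  have coef: "coef_a d m j = (real (Suc p) + \<beta>) / (2 * real (Suc p) + \<beta>)"
    using \<open>2 \<le> m\<close> denom_pos unfolding numer denom by (simp add: coef_a_def field_simps)
  have "(2 * real (Suc p) + \<beta>) * hom_jacobi (Suc p) (-1) \<beta> x t
      = (real (Suc p) + \<beta>) * (hom_jacobi (Suc p) 0 \<beta> x t - t\<^sup>2 * hom_jacobi p 0 \<beta> x t)"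
    using hom_jacobi_param_minus_one[of p 0 \<beta> x t] by (simp add: algebra_simps)
  with pos show ?thesis
    unfolding coef p(1) by (simp add: field_simps)
qed

theorem proposition2p2:
  fixes Y :: "real ^ 'd \<Rightarrow> real" and n m j :: int and x :: "real ^ 'd" and t :: real
  assumes "0 \<le> m" and "m \<le> n" and "0 \<le> j" and "2 * j \<le> m"
    and "harmonic_hom (nat (m - 2 * j)) Y"
  shows "Qpoly (-1) n m j Y x t =
    coef_a CARD('d) m j *
      ((Qpoly 0 n m j Y x t - of_int ((n - m + 1) * (n - m + 2)) * Qpoly 0 n (m - 2) (j - 1) Y x t)
       - 2 * (Qpoly 0 (n - 1) m j Y x t
              - of_int ((n + m + int CARD('d) - 2) * (n - m + 1)) * Qpoly 0 (n - 1) (m - 2) (j - 1) Y x t)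
       + (Qpoly 0 (n - 2) m j Y x t
              - of_int ((n + m + int CARD('d) - 2) * (n + m + int CARD('d) - 3)) * Qpoly 0 (n - 2) (m - 2) (j - 1) Y x t))"
proof -
  define \<beta> where "\<beta> = of_int m - 2 * of_int j + (real CARD('d) - 2) / 2"
  define L where "L = laguerre_int (n - m) (2 * of_int m + real CARD('d) - 2) t"
  note lhs = Qpoly_minus_one_eq_factors[OF assms(1,3), of n Y x t, folded L_def \<beta>_def]
  note upper = Qpoly_second_difference[OF assms(1,3), of n Y x t, folded L_def \<beta>_def]
  show ?thesis
  proof (cases "j = 0")
    case True
    moreover have "Qpoly 0 n' (m - 2) (j - 1) Y x t = 0" for n'
      using True by (simp add: Qpoly_def)
    ultimately show ?thesis
      using lhs upper coef_a_0[OF _ assms(1)] by (simp add: hom_jacobi_def algebra_simps)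
  next
    case False
    then have "1 \<le> j" "2 \<le> m" using assms by auto
    with lhs upper show ?thesis
      using Qpoly_lower_combination[OF \<open>2 \<le> m\<close> assms(2) \<open>1 \<le> j\<close>, of Y x t, folded L_def \<beta>_def]
        hom_jacobi_minus_one_eq_coef_a[OF \<open>1 \<le> j\<close> assms(4), of "CARD('d)" x t, folded \<beta>_def]
      by (simp add: algebra_simps)
  qed
qed

end
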